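(* Let $p\in[1,\infty)$, $w$ a weight sequence, and let $A\subset L_{p,w}$ be bounded in $\|\cdot\|_{p,w}$ and equinormed with respect to $\{\|\cdot\|_{p,w,i}\}_{i\in\mathbb{N}}$. Then $$\forall\varepsilon>0\ \exists N\in\mathbb{N}\ \forall a\in A\ \forall i\ge N:\ \|(a_{i+1},a_{i+2},\dots)\|_{p,w}^p<\varepsilon.$$
   Context: A weight sequence is a sequence $w=(w_i)$ of positive reals with $w_1=1\ge w_2\ge\dots$, $w_i\to0$, and $\sum_i w_i=+\infty$. For a real sequence $a$, $\|a\|_{p,w}=\sup_{\sigma}\big(\sum_{i=1}^\infty |a_{\sigma_i}|^p w_i\big)^{1/p}$ over all permutations $\sigma$ of $\mathbb{N}$; $L_{p,w}$ is the set of real sequences with finite norm. $\|a\|_{p,w,i}=\|(a_1,\dots,a_i,0,0,\dots)\|_{p,w}$. $A$ is equinormed if $\forall\varepsilon>0\ \exists i\ \forall a\in A:\ \|a\|_{p,w}\le\|a\|_{p,w,i}+\varepsilon$. *)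

theory Defs
  imports "HOL-Analysis.Analysis"
begin

text \<open>Sequences are indexed from 0: the paper's a_1, a_2, ... is a 0, a 1, ...\<close>

definition weight_seq :: "(nat \<Rightarrow> real) \<Rightarrow> bool" where
  "weight_seq w \<longleftrightarrow> (\<forall>i. w i > 0) \<and> w 0 = 1 \<and> decseq w \<and> w \<longlonglongrightarrow> 0
     \<and> \<not> summable w"

definition lpw_pow :: "real \<Rightarrow> (nat \<Rightarrow> real) \<Rightarrow> (nat \<Rightarrow> real) \<Rightarrow> ennreal" where
  "lpw_pow p w a = (SUP \<sigma>\<in>{\<sigma>. bij \<sigma>}. (\<Sum>i. ennreal (\<bar>a (\<sigma> i)\<bar> powr p * w i)))"

definition Lpw :: "real \<Rightarrow> (nat \<Rightarrow> real) \<Rightarrow> (nat \<Rightarrow> real) set" where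
  "Lpw p w = {a. lpw_pow p w a < \<infinity>}"

definition lpw_norm :: "real \<Rightarrow> (nat \<Rightarrow> real) \<Rightarrow> (nat \<Rightarrow> real) \<Rightarrow> real" where
  "lpw_norm p w a = enn2real (lpw_pow p w a) powr (1 / p)"

definition trunc_seq :: "nat \<Rightarrow> (nat \<Rightarrow> real) \<Rightarrow> nat \<Rightarrow> real" where
  "trunc_seq i a = (\<lambda>k. if k < i then a k else 0)"

definition lpw_norm_i :: "real \<Rightarrow> (nat \<Rightarrow> real) \<Rightarrow> nat \<Rightarrow> (nat \<Rightarrow> real) \<Rightarrow> real" where
  "lpw_norm_i p w i a = lpw_norm p w (trunc_seq i a)"

definition equinormed :: "real \<Rightarrow> (nat \<Rightarrow> real) \<Rightarrow> (nat \<Rightarrow> real) set \<Rightarrow> bool" where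
  "equinormed p w A \<longleftrightarrow>
     (\<forall>\<epsilon>>0. \<exists>i. \<forall>a\<in>A. lpw_norm p w a \<le> lpw_norm_i p w i a + \<epsilon>)"

text \<open>Tail (a_{i+1}, a_{i+2}, ...) in 1-based indexing.\<close>
definition tail_seq :: "nat \<Rightarrow> (nat \<Rightarrow> real) \<Rightarrow> nat \<Rightarrow> real" where
  "tail_seq i a = (\<lambda>k. a (k + i))"

end

(* With W n = w 0 + ... + w (n - 1), the p-th power of the norm has the layer-cake form
     ||a||^p = integral over x > 0 of W (#{k. x < |a k|^p}),
   since sorting finite pieces decreasingly is optimal among rearrangements.  Boundedness of A
   gives a uniform bound M on the size of the level sets above any fixed l > 0, and
   equinormedness (through uniform continuity of y -> y^p on bounded intervals) gives
   ||a||^p <= ||(a_1, ..., a_i)||^p + eta uniformly on A.  For n >= i the tail and the first i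
   entries occupy disjoint parts of each level set, and the gap W (#level set of a) -
   W (#level set of the truncation) integrates to at most eta.  Below l this gap plus W i
   dominates W (#level set of the tail); above l, as w decreases and all counts are at most M,
   the gap for a second truncation index j dominates it up to the factor w M.  Choosing i,
   then l and M, then j makes the tail small. *)
theory Submission
  imports Defs
begin

section \<open>Partial sums of the weights and rearrangements\<close>

definition weight_sum :: "(nat \<Rightarrow> real) \<Rightarrow> nat \<Rightarrow> real" where
  "weight_sum w n = (\<Sum>k<n. w k)"

lemma weight_sum_nonneg: "(\<And>i. 0 \<le> w i) \<Longrightarrow> 0 \<le> weight_sum w n"
  unfolding weight_sum_def by (simp add: sum_nonneg)

lemma weight_sum_mono: "(\<And>i. 0 \<le> w i) \<Longrightarrow> m \<le> n \<Longrightarrow> weight_sum w m \<le> weight_sum w n"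
  unfolding weight_sum_def by (intro sum_mono2) auto

lemma weight_sum_add: "weight_sum w (m + t) = weight_sum w m + (\<Sum>k<t. w (m + k))"
  by (induction t) (auto simp: weight_sum_def)

lemma weight_sum_unbounded:
  assumes "\<And>i. 0 \<le> w i" and "\<not> summable w"
  shows "\<exists>n. B < weight_sum w n"
proof (rule ccontr)
  assume "\<nexists>n. B < weight_sum w n"
  then have "summable w"
    using assms(1) by (intro summableI_nonneg_bounded[of w B]) (auto simp: weight_sum_def not_less)
  with assms(2) show False ..
qed

lemma sum_le_weight_sum_card:
  assumes "decseq w" and "finite J"
  shows "(\<Sum>k\<in>J. w k) \<le> weight_sum w (card J)"
  using assms(2)
proof (induction "card J" arbitrary: J)
  case 0
  then show ?case by (simp add: weight_sum_def)
next
  case (Suc n)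
  define m where "m = Max J"
  have "J \<noteq> {}" using Suc by auto
  then have m: "m \<in> J" "J \<subseteq> {..m}" using Suc m_def by auto
  then have "n \<le> m" using Suc card_mono[of "{..m}" J] by simp
  then have "w m \<le> w n" using assms(1) by (simp add: decseq_def)
  moreover have "(\<Sum>k\<in>J - {m}. w k) \<le> weight_sum w n"
    using Suc m by (metis card_Diff_singleton diff_Suc_1 finite_Diff)
  moreover have "(\<Sum>k\<in>J. w k) = (\<Sum>k\<in>J - {m}. w k) + w m"
    using Suc m by (metis add.commute sum.remove)
  ultimately show ?case using Suc(2)[symmetric] by (simp add: weight_sum_def)
qed

lemma bij_extending_distinct_list:
  fixes ys :: "nat list"
  assumes "distinct ys"
  shows "\<exists>\<sigma>. bij \<sigma> \<and> (\<forall>j<length ys. \<sigma> j = ys ! j)"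
proof -
  define m where "m = length ys"
  define e where "e = enumerate (- set ys)"
  have "infinite (- set ys)" by (simp add: Compl_eq_Diff_UNIV)
  then have e: "bij_betw e UNIV (- set ys)" unfolding e_def by (rule bij_enumerate)
  define \<sigma> where "\<sigma> j = (if j < m then ys ! j else e (j - m))" for j
  have "bij_betw \<sigma> {..<m} (set ys)"
  proof (rule bij_betw_cong[THEN iffD1])
    show "bij_betw (\<lambda>j. ys ! j) {..<m} (set ys)"
      using assms by (simp add: bij_betw_nth m_def lessThan_atLeast0)
  qed (simp add: \<sigma>_def)
  moreover have "bij_betw (\<lambda>j. j - m) {m..} UNIV"
    by (rule bij_betwI[where g = "\<lambda>j. j + m"]) auto
  then have "bij_betw (e \<circ> (\<lambda>j. j - m)) {m..} (- set ys)"
    using e by (rule bij_betw_trans)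
  then have "bij_betw \<sigma> {m..} (- set ys)"
    by (rule bij_betw_cong[THEN iffD1, rotated]) (simp add: \<sigma>_def)
  ultimately have "bij_betw \<sigma> ({..<m} \<union> {m..}) (set ys \<union> - set ys)"
    by (rule bij_betw_combine) auto
  moreover have "{..<m} \<union> {m..} = UNIV" by auto
  ultimately have "bij \<sigma>" by simp
  then show ?thesis unfolding \<sigma>_def m_def by auto
qed

lemma distinct_list_sum_le_lpw_pow:
  assumes "distinct ys"
  shows "(\<Sum>j<length ys. ennreal (\<bar>a (ys ! j)\<bar> powr p * w j)) \<le> lpw_pow p w a"
proof -
  obtain \<sigma> where \<sigma>: "bij \<sigma>" "\<forall>j<length ys. \<sigma> j = ys ! j"
    using bij_extending_distinct_list[OF assms] by blast
  have "(\<Sum>j<length ys. ennreal (\<bar>a (ys ! j)\<bar> powr p * w j))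
      = (\<Sum>j<length ys. ennreal (\<bar>a (\<sigma> j)\<bar> powr p * w j))"
    using \<sigma>(2) by simp
  also have "\<dots> \<le> (\<Sum>j. ennreal (\<bar>a (\<sigma> j)\<bar> powr p * w j))"
    by (rule sum_le_suminf) auto
  also have "\<dots> \<le> lpw_pow p w a"
    unfolding lpw_pow_def using \<sigma>(1) by (intro SUP_upper) auto
  finally show ?thesis .
qed

lemma lpw_pow_mono:
  assumes "0 \<le> p" and "\<And>i. 0 \<le> w i" and "\<And>k. \<bar>b k\<bar> \<le> \<bar>a k\<bar>"
  shows "lpw_pow p w b \<le> lpw_pow p w a"
  unfolding lpw_pow_def
proof (rule SUP_mono)
  fix \<sigma> :: "nat \<Rightarrow> nat" assume "\<sigma> \<in> {\<sigma>. bij \<sigma>}"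
  moreover have "(\<Sum>i. ennreal (\<bar>b (\<sigma> i)\<bar> powr p * w i)) \<le> (\<Sum>i. ennreal (\<bar>a (\<sigma> i)\<bar> powr p * w i))"
    using assms by (intro suminf_le ennreal_leI mult_right_mono powr_mono2) auto
  ultimately show "\<exists>\<tau>\<in>{\<sigma>. bij \<sigma>}.
      (\<Sum>i. ennreal (\<bar>b (\<sigma> i)\<bar> powr p * w i)) \<le> (\<Sum>i. ennreal (\<bar>a (\<tau> i)\<bar> powr p * w i))"
    by blast
qed

section \<open>Layer-cake representation\<close>

definition prefix_layer :: "real \<Rightarrow> (nat \<Rightarrow> real) \<Rightarrow> (nat \<Rightarrow> real) \<Rightarrow> nat \<Rightarrow> real \<Rightarrow> ennreal" where
  "prefix_layer p w a n x =
     ennreal (weight_sum w (card {k. k < n \<and> x < \<bar>a k\<bar> powr p})) * indicator {0<..} x"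

text \<open>For \<open>x > 0\<close> this is \<open>W (card {k. x < \<bar>a k\<bar> powr p})\<close>, with \<open>W = weight_sum w\<close> read as a
  supremum over initial segments so that infinite level sets are allowed.\<close>
definition lpw_layer :: "real \<Rightarrow> (nat \<Rightarrow> real) \<Rightarrow> (nat \<Rightarrow> real) \<Rightarrow> real \<Rightarrow> ennreal" where
  "lpw_layer p w a x = (SUP n. prefix_layer p w a n x)"

lemma incseq_prefix_layer:
  assumes "\<And>i. 0 \<le> w i"
  shows "incseq (\<lambda>n. prefix_layer p w a n)"
proof (rule incseq_SucI, rule le_funI)
  fix n x
  have "card {k. k < n \<and> x < \<bar>a k\<bar> powr p} \<le> card {k. k < Suc n \<and> x < \<bar>a k\<bar> powr p}"
    by (intro card_mono) auto
  then show "prefix_layer p w a n x \<le> prefix_layer p w a (Suc n) x"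
    unfolding prefix_layer_def using assms
    by (intro mult_right_mono ennreal_leI weight_sum_mono) auto
qed

lemma prefix_layer_measurable:
  assumes "\<And>i. 0 \<le> w i"
  shows "prefix_layer p w a n \<in> borel_measurable lborel"
proof -
  define f where "f x = weight_sum w (card {k. k < n \<and> x < \<bar>a k\<bar> powr p})" for x :: real
  have "mono (\<lambda>x. - f x)"
  proof (rule monoI)
    fix x y :: real assume "x \<le> y"
    then have "card {k. k < n \<and> y < \<bar>a k\<bar> powr p} \<le> card {k. k < n \<and> x < \<bar>a k\<bar> powr p}"
      by (intro card_mono) auto
    then show "- f x \<le> - f y" unfolding f_def using assms by (simp add: weight_sum_mono)
  qed
  then have "f \<in> borel_measurable borel"
    using borel_measurable_mono borel_measurable_uminus_eq by blast
  then show ?thesis unfolding prefix_layer_def f_def[symmetric] by measurable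
qed

lemma lpw_layer_measurable:
  "(\<And>i. 0 \<le> w i) \<Longrightarrow> lpw_layer p w a \<in> borel_measurable lborel"
  unfolding lpw_layer_def using prefix_layer_measurable by measurable

lemma nn_integral_const_indicator_Ioo:
  "0 \<le> c \<Longrightarrow> 0 \<le> u \<Longrightarrow> (\<integral>\<^sup>+x. ennreal c * indicator {0<..<u} x \<partial>lborel) = ennreal (u * c)"
  by (simp add: nn_integral_cmult_indicator ennreal_mult'' mult.commute)

lemma sum_indicator_le_lpw_layer:
  assumes "\<And>i. 0 \<le> w i" and "decseq w" and "inj \<sigma>"
  shows "(\<Sum>i<K. ennreal (w i) * indicator {0<..<\<bar>a (\<sigma> i)\<bar> powr p} x) \<le> lpw_layer p w a x"
proof (cases "0 < x")
  case False
  then show ?thesis by (simp add: indicator_def)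
next
  case True
  define J where "J = {i. i < K \<and> x < \<bar>a (\<sigma> i)\<bar> powr p}"
  define n where "n = Suc (Max (\<sigma> ` {..<K}))"
  have "\<sigma> ` J \<subseteq> {k. k < n \<and> x < \<bar>a k\<bar> powr p}"
    unfolding J_def n_def by (auto simp: le_imp_less_Suc)
  then have card_J: "card J \<le> card {k. k < n \<and> x < \<bar>a k\<bar> powr p}"
    using card_mono[of _ "\<sigma> ` J"] card_image[OF inj_on_subset[OF assms(3)]] by fastforce
  have "(\<Sum>i<K. ennreal (w i) * indicator {0<..<\<bar>a (\<sigma> i)\<bar> powr p} x)
      = (\<Sum>i<K. if x < \<bar>a (\<sigma> i)\<bar> powr p then ennreal (w i) else 0)"
    using True by (intro sum.cong) auto
  also have "\<dots> = ennreal (\<Sum>i\<in>J. w i)"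
    unfolding J_def using assms(1) by (simp add: sum.inter_filter[symmetric] sum_ennreal)
  also have "\<dots> \<le> ennreal (weight_sum w (card J))"
    using sum_le_weight_sum_card[OF assms(2)] by (simp add: J_def ennreal_leI)
  also have "\<dots> \<le> prefix_layer p w a n x"
    unfolding prefix_layer_def using True card_J assms(1) by (simp add: ennreal_leI weight_sum_mono)
  also have "\<dots> \<le> lpw_layer p w a x"
    unfolding lpw_layer_def by (rule SUP_upper) simp
  finally show ?thesis .
qed

lemma lpw_pow_le_integral_lpw_layer:
  assumes "\<And>i. 0 \<le> w i" and "decseq w"
  shows "lpw_pow p w a \<le> (\<integral>\<^sup>+x. lpw_layer p w a x \<partial>lborel)"
  unfolding lpw_pow_def
proof (rule SUP_least)
  fix \<sigma> :: "nat \<Rightarrow> nat" assume "\<sigma> \<in> {\<sigma>. bij \<sigma>}"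
  then have "inj \<sigma>" by (simp add: bij_is_inj)
  show "(\<Sum>i. ennreal (\<bar>a (\<sigma> i)\<bar> powr p * w i)) \<le> (\<integral>\<^sup>+x. lpw_layer p w a x \<partial>lborel)"
    unfolding suminf_eq_SUP
  proof (rule SUP_least)
    fix K
    have "(\<Sum>i<K. ennreal (\<bar>a (\<sigma> i)\<bar> powr p * w i))
        = (\<Sum>i<K. \<integral>\<^sup>+x. ennreal (w i) * indicator {0<..<\<bar>a (\<sigma> i)\<bar> powr p} x \<partial>lborel)"
      using assms(1) by (simp add: nn_integral_const_indicator_Ioo)
    also have "\<dots> = (\<integral>\<^sup>+x. (\<Sum>i<K. ennreal (w i) * indicator {0<..<\<bar>a (\<sigma> i)\<bar> powr p} x) \<partial>lborel)"
      by (rule nn_integral_sum[symmetric]) measurable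
    also have "\<dots> \<le> (\<integral>\<^sup>+x. lpw_layer p w a x \<partial>lborel)"
      using assms \<open>inj \<sigma>\<close> by (intro nn_integral_mono sum_indicator_le_lpw_layer)
    finally show "(\<Sum>i<K. ennreal (\<bar>a (\<sigma> i)\<bar> powr p * w i)) \<le> (\<integral>\<^sup>+x. lpw_layer p w a x \<partial>lborel)" .
  qed
qed

lemma downward_closed_eq_lessThan_card:
  fixes J :: "nat set"
  assumes "finite J" and "\<And>i j. j \<in> J \<Longrightarrow> i \<le> j \<Longrightarrow> i \<in> J"
  shows "J = {..<card J}"
proof (cases "J = {}")
  case False
  then have "Max J \<in> J" using assms(1) by simp
  then have "J = {..Max J}" using assms by (auto intro: Max_ge)
  then show ?thesis by (metis card_lessThan lessThan_Suc_atMost)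
qed simp

lemma card_Collect_reindex_permutation:
  assumes "distinct ys" and "set ys = {..<n}"
  shows "card {k. k < n \<and> P k} = card {j. j < n \<and> P (ys ! j)}"
proof -
  have "length ys = n" using assms by (metis card_lessThan distinct_card)
  have "{k. k < n \<and> P k} = (!) ys ` {j. j < n \<and> P (ys ! j)}"
  proof (intro equalityI subsetI)
    fix k assume k: "k \<in> {k. k < n \<and> P k}"
    then obtain j where "j < n" "ys ! j = k"
      using assms(2) \<open>length ys = n\<close> by (metis in_set_conv_nth lessThan_iff mem_Collect_eq)
    with k show "k \<in> (!) ys ` {j. j < n \<and> P (ys ! j)}" by auto
  next
    fix k assume "k \<in> (!) ys ` {j. j < n \<and> P (ys ! j)}"
    then show "k \<in> {k. k < n \<and> P k}" using assms(2) \<open>length ys = n\<close> nth_mem by force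
  qed
  moreover have "inj_on ((!) ys) {j. j < n \<and> P (ys ! j)}"
    using assms(1) \<open>length ys = n\<close> by (intro inj_on_nth) auto
  ultimately show ?thesis by (simp add: card_image)
qed

text \<open>Sorting the first \<open>n\<close> entries decreasingly turns every level set into an initial segment
  of the sorted order, on which \<open>W\<close> is a plain sum of weights.\<close>
lemma prefix_layer_eq_sorted_sum:
  assumes "\<And>i. 0 \<le> w i"
  obtains ys where "distinct ys" and "length ys = n" and
    "\<And>x. prefix_layer p w a n x = (\<Sum>j<n. ennreal (w j) * indicator {0<..<\<bar>a (ys ! j)\<bar> powr p} x)"
proof -
  define ys where "ys = sort_key (\<lambda>k. - (\<bar>a k\<bar> powr p)) [0..<n]"
  have ys: "distinct ys" "length ys = n" "set ys = {..<n}" unfolding ys_def by auto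
  define u where "u j = \<bar>a (ys ! j)\<bar> powr p" for j
  have u_antimono: "u j' \<le> u j" if "j \<le> j'" and "j' < n" for j j'
  proof -
    have "sorted (map (\<lambda>k. - (\<bar>a k\<bar> powr p)) ys)" unfolding ys_def by simp
    then show ?thesis using that sorted_nth_mono ys(2) unfolding u_def by fastforce
  qed
  have "prefix_layer p w a n x = (\<Sum>j<n. ennreal (w j) * indicator {0<..<u j} x)" for x
  proof (cases "0 < x")
    case False
    then show ?thesis unfolding prefix_layer_def by simp
  next
    case True
    define J where "J = {j. j < n \<and> x < u j}"
    have "card {k. k < n \<and> x < \<bar>a k\<bar> powr p} = card J"
      unfolding J_def u_def using ys(1,3) by (rule card_Collect_reindex_permutation)
    moreover have "J = {..<card J}"
    proof (rule downward_closed_eq_lessThan_card)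
      show "finite J" unfolding J_def by simp
      show "i \<in> J" if "j \<in> J" and "i \<le> j" for i j
        using that u_antimono[of i j] unfolding J_def by fastforce
    qed
    then have "weight_sum w (card J) = (\<Sum>j\<in>J. w j)" unfolding weight_sum_def by metis
    ultimately have "prefix_layer p w a n x = (\<Sum>j\<in>J. ennreal (w j))"
      unfolding prefix_layer_def using True assms by (simp add: sum_ennreal)
    also have "\<dots> = (\<Sum>j<n. if x < u j then ennreal (w j) else 0)"
      unfolding J_def by (simp add: sum.inter_filter[symmetric])
    also have "\<dots> = (\<Sum>j<n. ennreal (w j) * indicator {0<..<u j} x)"
      using True by (intro sum.cong) auto
    finally show ?thesis .
  qed
  then show ?thesis using that ys unfolding u_def by blast
qed

lemma integral_prefix_layer_le_lpw_pow:
  assumes "\<And>i. 0 \<le> w i"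
  shows "(\<integral>\<^sup>+x. prefix_layer p w a n x \<partial>lborel) \<le> lpw_pow p w a"
proof -
  obtain ys where ys: "distinct ys" "length ys = n" and eq:
    "\<And>x. prefix_layer p w a n x = (\<Sum>j<n. ennreal (w j) * indicator {0<..<\<bar>a (ys ! j)\<bar> powr p} x)"
    by (rule prefix_layer_eq_sorted_sum[where w = w and p = p and a = a and n = n])
      (use assms in auto)
  have "(\<integral>\<^sup>+x. prefix_layer p w a n x \<partial>lborel)
      = (\<Sum>j<n. \<integral>\<^sup>+x. ennreal (w j) * indicator {0<..<\<bar>a (ys ! j)\<bar> powr p} x \<partial>lborel)"
    unfolding eq by (rule nn_integral_sum) measurable
  also have "\<dots> = (\<Sum>j<length ys. ennreal (\<bar>a (ys ! j)\<bar> powr p * w j))"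
    using assms ys(2) by (simp add: nn_integral_const_indicator_Ioo)
  also have "\<dots> \<le> lpw_pow p w a" by (rule distinct_list_sum_le_lpw_pow[OF ys(1)])
  finally show ?thesis .
qed

theorem lpw_pow_layer_cake:
  assumes "\<And>i. 0 \<le> w i" and "decseq w"
  shows "lpw_pow p w a = (\<integral>\<^sup>+x. lpw_layer p w a x \<partial>lborel)"
proof (rule antisym)
  show "lpw_pow p w a \<le> (\<integral>\<^sup>+x. lpw_layer p w a x \<partial>lborel)"
    by (rule lpw_pow_le_integral_lpw_layer[OF assms])
  have "(\<integral>\<^sup>+x. lpw_layer p w a x \<partial>lborel) = (SUP n. \<integral>\<^sup>+x. prefix_layer p w a n x \<partial>lborel)"
    unfolding lpw_layer_def using assms(1)
    by (intro nn_integral_monotone_convergence_SUP incseq_prefix_layer prefix_layer_measurable)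
  also have "\<dots> \<le> lpw_pow p w a"
    using assms(1) by (intro SUP_least integral_prefix_layer_le_lpw_pow)
  finally show "(\<integral>\<^sup>+x. lpw_layer p w a x \<partial>lborel) \<le> lpw_pow p w a" .
qed

section \<open>Level sets, truncations and tails\<close>

lemma weight_sum_level_count_le_lpw_pow:
  assumes "\<And>i. 0 \<le> w i" and "0 \<le> l"
  shows "ennreal (l * weight_sum w (card {k. k < n \<and> l < \<bar>a k\<bar> powr p})) \<le> lpw_pow p w a"
proof -
  define ys where "ys = filter (\<lambda>k. l < \<bar>a k\<bar> powr p) [0..<n]"
  have "distinct ys" and set_ys: "set ys = {k. k < n \<and> l < \<bar>a k\<bar> powr p}"
    unfolding ys_def by auto
  then have "length ys = card {k. k < n \<and> l < \<bar>a k\<bar> powr p}"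
    by (metis distinct_card)
  then have "ennreal (l * weight_sum w (card {k. k < n \<and> l < \<bar>a k\<bar> powr p}))
      = (\<Sum>j<length ys. ennreal (l * w j))"
    unfolding weight_sum_def using assms by (simp add: sum_distrib_left sum_ennreal)
  also have "\<dots> \<le> (\<Sum>j<length ys. ennreal (\<bar>a (ys ! j)\<bar> powr p * w j))"
  proof (rule sum_mono)
    fix j assume "j \<in> {..<length ys}"
    then have "l < \<bar>a (ys ! j)\<bar> powr p" using set_ys nth_mem by fastforce
    then show "ennreal (l * w j) \<le> ennreal (\<bar>a (ys ! j)\<bar> powr p * w j)"
      using assms by (intro ennreal_leI mult_right_mono) auto
  qed
  also have "\<dots> \<le> lpw_pow p w a" by (rule distinct_list_sum_le_lpw_pow) fact
  finally show ?thesis .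
qed

lemma finite_card_le_of_prefix_card_le:
  fixes P :: "nat \<Rightarrow> bool"
  assumes "\<And>n. card {k. k < n \<and> P k} \<le> M"
  shows "finite {k. P k}" and "card {k. P k} \<le> M"
proof -
  have card_T: "card T \<le> M" if "finite T" and "T \<subseteq> {k. P k}" for T
  proof -
    obtain n where "T \<subseteq> {..<n}" using \<open>finite T\<close> finite_nat_bounded by blast
    then have "card T \<le> card {k. k < n \<and> P k}" using that by (intro card_mono) auto
    then show ?thesis using assms[of n] by simp
  qed
  show "finite {k. P k}"
  proof (rule ccontr)
    assume "infinite {k. P k}"
    then obtain T where "finite T" "card T = Suc M" "T \<subseteq> {k. P k}"
      using infinite_arbitrarily_large by blast
    then show False using card_T by fastforce
  qed
  then show "card {k. P k} \<le> M" by (rule card_T) simp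
qed

lemma level_set_card_le:
  assumes "\<And>i. 0 \<le> w i" and "0 \<le> l" and "lpw_pow p w a < ennreal (l * weight_sum w (Suc M))"
  shows "finite {k. l < \<bar>a k\<bar> powr p}" and "card {k. l < \<bar>a k\<bar> powr p} \<le> M"
proof -
  have "card {k. k < n \<and> l < \<bar>a k\<bar> powr p} \<le> M" for n
  proof (rule ccontr)
    assume "\<not> ?thesis"
    then have "ennreal (l * weight_sum w (Suc M))
        \<le> ennreal (l * weight_sum w (card {k. k < n \<and> l < \<bar>a k\<bar> powr p}))"
      using assms(1,2) by (intro ennreal_leI mult_left_mono weight_sum_mono) auto
    also have "\<dots> \<le> lpw_pow p w a" by (rule weight_sum_level_count_le_lpw_pow) fact+
    finally show False using assms(3) by simp
  qed
  then show "finite {k. l < \<bar>a k\<bar> powr p}" and "card {k. l < \<bar>a k\<bar> powr p} \<le> M"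
    by (rule finite_card_le_of_prefix_card_le)+
qed

lemma finite_level_set:
  assumes "\<And>i. 0 \<le> w i" and "\<not> summable w" and "lpw_pow p w a < \<infinity>" and "0 < l"
  shows "finite {k. l < \<bar>a k\<bar> powr p}"
proof -
  obtain M where "enn2real (lpw_pow p w a) / l < weight_sum w M"
    using weight_sum_unbounded[OF assms(1,2)] by blast
  then have "lpw_pow p w a < ennreal (l * weight_sum w M)"
    using assms by (simp add: field_simps ennreal_less_iff less_top[symmetric])
  also have "\<dots> \<le> ennreal (l * weight_sum w (Suc M))"
    using assms by (intro ennreal_leI mult_left_mono weight_sum_mono) auto
  finally have "lpw_pow p w a < ennreal (l * weight_sum w (Suc M))" .
  then show ?thesis by (rule level_set_card_le(1)[OF assms(1) less_imp_le[OF assms(4)]])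
qed

lemma lpw_layer_finite_level:
  assumes "\<And>i. 0 \<le> w i" and "0 < x" and "finite {k. x < \<bar>a k\<bar> powr p}"
  shows "lpw_layer p w a x = ennreal (weight_sum w (card {k. x < \<bar>a k\<bar> powr p}))"
  unfolding lpw_layer_def
proof (rule antisym)
  show "(SUP n. prefix_layer p w a n x) \<le> ennreal (weight_sum w (card {k. x < \<bar>a k\<bar> powr p}))"
    unfolding prefix_layer_def using assms
    by (intro SUP_least) (auto intro!: ennreal_leI weight_sum_mono card_mono)
  obtain n where "{k. x < \<bar>a k\<bar> powr p} \<subseteq> {..<n}"
    using assms(3) finite_nat_bounded by blast
  then have "{k. k < n \<and> x < \<bar>a k\<bar> powr p} = {k. x < \<bar>a k\<bar> powr p}" by auto
  then have "prefix_layer p w a n x = ennreal (weight_sum w (card {k. x < \<bar>a k\<bar> powr p}))"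
    unfolding prefix_layer_def using assms(2) by simp
  then show "ennreal (weight_sum w (card {k. x < \<bar>a k\<bar> powr p})) \<le> (SUP n. prefix_layer p w a n x)"
    by (metis SUP_upper UNIV_I)
qed

lemma lpw_layer_mono:
  assumes "0 \<le> p" and "\<And>i. 0 \<le> w i" and "\<And>k. \<bar>b k\<bar> \<le> \<bar>a k\<bar>"
  shows "lpw_layer p w b x \<le> lpw_layer p w a x"
  unfolding lpw_layer_def
proof (intro SUP_mono bexI)
  fix n
  have "\<bar>b k\<bar> powr p \<le> \<bar>a k\<bar> powr p" for k
    using assms(1,3) by (simp add: powr_mono2)
  then have "card {k. k < n \<and> x < \<bar>b k\<bar> powr p} \<le> card {k. k < n \<and> x < \<bar>a k\<bar> powr p}"
    by (intro card_mono) (auto intro: less_le_trans)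
  then show "prefix_layer p w b n x \<le> prefix_layer p w a n x"
    unfolding prefix_layer_def using assms(2)
    by (intro mult_right_mono ennreal_leI weight_sum_mono) auto
qed simp

lemma abs_trunc_seq_le: "\<bar>trunc_seq i a k\<bar> \<le> \<bar>a k\<bar>"
  by (simp add: trunc_seq_def)

lemma level_set_trunc_seq:
  "0 \<le> x \<Longrightarrow> {k. x < \<bar>trunc_seq j a k\<bar> powr p} = {k \<in> {k. x < \<bar>a k\<bar> powr p}. k < j}"
  unfolding trunc_seq_def by auto

lemma bij_betw_level_set_tail_seq:
  "bij_betw (\<lambda>k. k + n) {k. x < \<bar>tail_seq n a k\<bar> powr p} {k \<in> {k. x < \<bar>a k\<bar> powr p}. n \<le> k}"
  by (rule bij_betwI[where g = "\<lambda>k. k - n"]) (auto simp: tail_seq_def)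

lemma lpw_layer_nonpos: "x \<le> 0 \<Longrightarrow> lpw_layer p w a x = 0"
  unfolding lpw_layer_def prefix_layer_def by simp

lemma weight_sum_le_gap_div:
  assumes "\<And>i. 0 < w i" and "decseq w" and "\<And>i. w i \<le> 1"
    and "m + t \<le> X" and "X \<le> M"
  shows "weight_sum w t \<le> (weight_sum w X - weight_sum w m) / w M"
proof -
  have "real t * w M = (\<Sum>k<t. w M)" by simp
  also have "\<dots> \<le> (\<Sum>k<t. w (m + k))"
    using assms(2,4,5) by (intro sum_mono) (simp add: decseq_def)
  also have "\<dots> = weight_sum w (m + t) - weight_sum w m" by (simp add: weight_sum_add)
  also have "\<dots> \<le> weight_sum w X - weight_sum w m"
    using assms(1,4) by (simp add: less_imp_le weight_sum_mono)
  finally have "real t \<le> (weight_sum w X - weight_sum w m) / w M"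
    using assms(1) by (simp add: field_simps)
  moreover have "weight_sum w t \<le> real t"
    unfolding weight_sum_def using assms(3) sum_mono[of "{..<t}" w "\<lambda>_. 1"] by simp
  ultimately show ?thesis by linarith
qed

lemma weight_sum_tail_count_le:
  fixes x l :: real
  assumes "\<And>k. 0 < w k" and "decseq w" and "\<And>k. w k \<le> 1" and "0 < x"
    and "m \<le> i" and "m + t \<le> X" and "m' + t \<le> X" and "l \<le> x \<Longrightarrow> X \<le> M"
  shows "weight_sum w t \<le> (weight_sum w X - weight_sum w m)
      + weight_sum w i * indicator {0<..<l} x + (weight_sum w X - weight_sum w m') / w M"
proof -
  have w_nonneg: "0 \<le> w k" for k using assms(1) less_imp_le by blast
  have gap_nonneg: "0 \<le> weight_sum w X - weight_sum w q" if "q + t \<le> X" for q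
    using that w_nonneg by (simp add: weight_sum_mono)
  show ?thesis
  proof (cases "x < l")
    case True
    have "weight_sum w t \<le> weight_sum w X" and "weight_sum w m \<le> weight_sum w i"
      using assms(5,6) w_nonneg by (simp_all add: weight_sum_mono)
    moreover have "0 \<le> (weight_sum w X - weight_sum w m') / w M"
      using gap_nonneg[OF assms(7)] w_nonneg by simp
    ultimately show ?thesis using True assms(4) by simp
  next
    case False
    then have "X \<le> M" using assms(8) by simp
    with assms(1-3,7) have "weight_sum w t \<le> (weight_sum w X - weight_sum w m') / w M"
      by (rule weight_sum_le_gap_div)
    moreover have "0 \<le> weight_sum w i * indicator {0<..<l} x"
      using w_nonneg by (simp add: weight_sum_nonneg)
    ultimately show ?thesis using gap_nonneg[OF assms(6)] by linarith
  qed
qed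

lemma card_prefix_add_card_suffix_le:
  fixes S :: "nat set"
  assumes "finite S" and "j \<le> n"
  shows "card {k \<in> S. k < j} + card {k \<in> S. n \<le> k} \<le> card S"
proof -
  have "card {k \<in> S. k < j} + card {k \<in> S. n \<le> k} = card ({k \<in> S. k < j} \<union> {k \<in> S. n \<le> k})"
    using assms by (subst card_Un_disjoint) auto
  also have "\<dots> \<le> card S" using assms(1) by (intro card_mono) auto
  finally show ?thesis .
qed

lemma lpw_layer_trunc_seq:
  assumes "\<And>i. 0 \<le> w i" and "0 < x" and "finite {k. x < \<bar>a k\<bar> powr p}"
  shows "lpw_layer p w (trunc_seq j a) x
    = ennreal (weight_sum w (card {k \<in> {k. x < \<bar>a k\<bar> powr p}. k < j}))"
  using assms lpw_layer_finite_level[of w x "trunc_seq j a" p] by (simp add: level_set_trunc_seq)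

lemma lpw_layer_tail_seq:
  assumes "\<And>i. 0 \<le> w i" and "0 < x" and "finite {k. x < \<bar>a k\<bar> powr p}"
  shows "lpw_layer p w (tail_seq n a) x
    = ennreal (weight_sum w (card {k \<in> {k. x < \<bar>a k\<bar> powr p}. n \<le> k}))"
  using assms lpw_layer_finite_level[of w x "tail_seq n a" p]
    bij_betw_finite[OF bij_betw_level_set_tail_seq]
    bij_betw_same_card[OF bij_betw_level_set_tail_seq]
  by simp

text \<open>Below \<open>l\<close> the tail is paid for by the gap of the truncation at \<open>i\<close> plus \<open>W i\<close>.
  Above \<open>l\<close> the level sets of \<open>a\<close> have at most \<open>M\<close> elements, so each tail element adds at
  least \<open>w M\<close> to the gap of the truncation at \<open>j\<close>.\<close>
lemma lpw_layer_tail_seq_le: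
  assumes "\<And>k. 0 < w k" and "decseq w" and "\<And>k. w k \<le> 1"
    and "0 < x \<Longrightarrow> finite {k. x < \<bar>a k\<bar> powr p}"
    and "l \<le> x \<Longrightarrow> card {k. x < \<bar>a k\<bar> powr p} \<le> M"
    and "i \<le> n" and "j \<le> n"
  shows "lpw_layer p w (tail_seq n a) x
      \<le> (lpw_layer p w a x - lpw_layer p w (trunc_seq i a) x)
        + ennreal (weight_sum w i) * indicator {0<..<l} x
        + ennreal (1 / w M) * (lpw_layer p w a x - lpw_layer p w (trunc_seq j a) x)"
proof (cases "0 < x")
  case False
  then show ?thesis by (simp add: lpw_layer_nonpos)
next
  case True
  have w_nonneg: "0 \<le> w k" for k using assms(1) less_imp_le by blast
  define S where "S = {k. x < \<bar>a k\<bar> powr p}"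
  have "finite S" using assms(4) True unfolding S_def by simp
  define X where "X = card S"
  define m where "m r = card {k \<in> S. k < r}" for r
  define t where "t = card {k \<in> S. n \<le> k}"
  have m_t: "m r + t \<le> X" if "r \<le> n" for r
    unfolding m_def t_def X_def using \<open>finite S\<close> that by (rule card_prefix_add_card_suffix_le)
  have "m i \<le> card {..<i}" unfolding m_def by (intro card_mono) auto
  then have "weight_sum w t \<le> (weight_sum w X - weight_sum w (m i))
      + weight_sum w i * indicator {0<..<l} x + (weight_sum w X - weight_sum w (m j)) / w M"
    using assms(1-3,5-7) True m_t unfolding X_def S_def by (intro weight_sum_tail_count_le) auto
  moreover have "0 \<le> weight_sum w X - weight_sum w (m r)" if "r \<le> n" for r
    using m_t[OF that] w_nonneg by (simp add: weight_sum_mono)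
  ultimately have "ennreal (weight_sum w t) \<le> ennreal (weight_sum w X - weight_sum w (m i))
      + ennreal (weight_sum w i * indicator {0<..<l} x)
      + ennreal ((weight_sum w X - weight_sum w (m j)) / w M)"
    using assms(6,7) w_nonneg
    by (simp add: ennreal_plus[symmetric] weight_sum_nonneg ennreal_leI del: ennreal_plus)
  also have "ennreal (weight_sum w i * indicator {0<..<l} x)
      = ennreal (weight_sum w i) * indicator {0<..<l} x"
    using w_nonneg by (simp add: ennreal_mult' weight_sum_nonneg ennreal_indicator)
  also have "ennreal ((weight_sum w X - weight_sum w (m j)) / w M)
      = ennreal (1 / w M) * ennreal (weight_sum w X - weight_sum w (m j))"
    using w_nonneg by (simp add: ennreal_mult'[symmetric])
  moreover have "lpw_layer p w a x - lpw_layer p w (trunc_seq r a) x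
      = ennreal (weight_sum w X - weight_sum w (m r))" for r
    using lpw_layer_finite_level[of w x a p] lpw_layer_trunc_seq[of w x a p r]
      w_nonneg True \<open>finite S\<close>
    unfolding X_def m_def S_def by (simp add: ennreal_minus weight_sum_nonneg)
  ultimately show ?thesis
    using lpw_layer_tail_seq[of w x a p n] w_nonneg True \<open>finite S\<close> unfolding t_def S_def by simp
qed

lemma nn_integral_lpw_layer_diff_le:
  assumes "0 \<le> p" and "\<And>i. 0 \<le> w i" and "decseq w" and "\<And>k. \<bar>h k\<bar> \<le> \<bar>b k\<bar>"
    and "lpw_pow p w b < \<infinity>" and "lpw_pow p w b \<le> lpw_pow p w h + ennreal \<eta>"
  shows "(\<integral>\<^sup>+x. (lpw_layer p w b x - lpw_layer p w h x) \<partial>lborel) \<le> ennreal \<eta>"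
proof -
  have [measurable]:
      "lpw_layer p w b \<in> borel_measurable lborel" "lpw_layer p w h \<in> borel_measurable lborel"
    using assms(2) by (blast intro: lpw_layer_measurable)+
  have "lpw_pow p w b
      = (\<integral>\<^sup>+x. (lpw_layer p w h x + (lpw_layer p w b x - lpw_layer p w h x)) \<partial>lborel)"
    using assms(1,2,4) lpw_layer_mono[of p w h b]
    by (simp add: lpw_pow_layer_cake[OF assms(2,3)] add_diff_inverse_ennreal)
  also have "\<dots> = lpw_pow p w h + (\<integral>\<^sup>+x. (lpw_layer p w b x - lpw_layer p w h x) \<partial>lborel)"
    by (simp add: nn_integral_add lpw_pow_layer_cake[OF assms(2,3)])
  finally have "lpw_pow p w h + (\<integral>\<^sup>+x. (lpw_layer p w b x - lpw_layer p w h x) \<partial>lborel)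
      \<le> lpw_pow p w h + ennreal \<eta>"
    using assms(6) by simp
  moreover have "lpw_pow p w h < \<infinity>"
    using lpw_pow_mono[OF assms(1,2,4)] assms(5) by (rule le_less_trans)
  ultimately show ?thesis by (auto simp: ennreal_add_left_cancel_le)
qed

lemma weight_seqD:
  assumes "weight_seq w"
  shows "0 < w i" and "0 \<le> w i" and "w i \<le> 1" and "decseq w" and "\<not> summable w"
  using assms unfolding weight_seq_def by (auto simp: less_imp_le) (metis decseq_def zero_le)

lemma lpw_pow_tail_seq_le:
  assumes "weight_seq w" and "0 < p" and "lpw_pow p w a < \<infinity>"
    and "0 < l" and "card {k. l < \<bar>a k\<bar> powr p} \<le> M" and "i \<le> n" and "j \<le> n"
    and "0 \<le> \<eta>" and "lpw_pow p w a \<le> lpw_pow p w (trunc_seq i a) + ennreal \<eta>"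
    and "0 \<le> \<zeta>" and "lpw_pow p w a \<le> lpw_pow p w (trunc_seq j a) + ennreal \<zeta>"
  shows "lpw_pow p w (tail_seq n a) \<le> ennreal (\<eta> + l * weight_sum w i + \<zeta> / w M)"
proof -
  have w_pos: "0 < w k" and w_nonneg: "0 \<le> w k" and w: "decseq w" "\<not> summable w" "w k \<le> 1"
    for k using weight_seqD[OF assms(1)] by auto
  have finite_level: "finite {k. x < \<bar>a k\<bar> powr p}" if "0 < x" for x
    using w_nonneg w(2) assms(3) that by (rule finite_level_set)
  have card_level: "card {k. x < \<bar>a k\<bar> powr p} \<le> M" if "l \<le> x" for x
  proof -
    have "card {k. x < \<bar>a k\<bar> powr p} \<le> card {k. l < \<bar>a k\<bar> powr p}"
      using that finite_level[OF assms(4)] by (intro card_mono) auto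
    with assms(5) show ?thesis by simp
  qed
  define D where "D r x = lpw_layer p w a x - lpw_layer p w (trunc_seq r a) x" for r x
  have [measurable]: "D r \<in> borel_measurable lborel" for r
    unfolding D_def using w_nonneg lpw_layer_measurable by measurable
  have gap: "integral\<^sup>N lborel (D r) \<le> ennreal c"
    if "lpw_pow p w a \<le> lpw_pow p w (trunc_seq r a) + ennreal c" for r c
    unfolding D_def using less_imp_le[OF assms(2)] w_nonneg w(1) abs_trunc_seq_le assms(3) that
    by (rule nn_integral_lpw_layer_diff_le)
  have "lpw_pow p w (tail_seq n a) = (\<integral>\<^sup>+x. lpw_layer p w (tail_seq n a) x \<partial>lborel)"
    using w_nonneg w(1) by (rule lpw_pow_layer_cake)
  also have "\<dots> \<le> (\<integral>\<^sup>+x. (D i x + ennreal (weight_sum w i) * indicator {0<..<l} x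
      + ennreal (1 / w M) * D j x) \<partial>lborel)"
    unfolding D_def
    by (intro nn_integral_mono lpw_layer_tail_seq_le[where w = w, OF w_pos w(1) w(3)
        finite_level card_level assms(6,7)])
  also have "\<dots> = integral\<^sup>N lborel (D i) + ennreal (weight_sum w i) * ennreal l
      + ennreal (1 / w M) * integral\<^sup>N lborel (D j)"
    using assms(4)
    by (simp add: nn_integral_add nn_integral_cmult nn_integral_cmult_indicator emeasure_lborel_Ioo)
  also have "\<dots> \<le> ennreal \<eta> + ennreal (weight_sum w i) * ennreal l + ennreal (1 / w M) * ennreal \<zeta>"
    using gap[OF assms(9)] gap[OF assms(11)] by (intro add_mono mult_left_mono order_refl) auto
  also have "\<dots> = ennreal (\<eta> + l * weight_sum w i + \<zeta> / w M)"
    using assms(4,8,10) w_nonneg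
    by (simp add: ennreal_mult'[symmetric] ennreal_plus[symmetric] weight_sum_nonneg mult.commute
        del: ennreal_plus)
  finally show ?thesis .
qed

section \<open>Bounded equinormed sets\<close>

lemma powr_uniformly_close:
  fixes C p \<eta> :: real
  assumes "0 < p" and "0 < \<eta>"
  shows "\<exists>\<delta>>0. \<forall>x y. 0 \<le> y \<longrightarrow> y \<le> x \<longrightarrow> x \<le> C \<longrightarrow> x \<le> y + \<delta> \<longrightarrow> x powr p < y powr p + \<eta>"
proof -
  have "uniformly_continuous_on {0..C} (\<lambda>y. y powr p)"
    using assms(1)
    by (intro compact_uniformly_continuous continuous_on_powr' continuous_intros) auto
  then obtain d where "0 < d"
    and d: "\<And>x y. x \<in> {0..C} \<Longrightarrow> y \<in> {0..C} \<Longrightarrow> dist y x < d \<Longrightarrow> dist (y powr p) (x powr p) < \<eta>"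
    using assms(2) unfolding uniformly_continuous_on_def by metis
  show ?thesis
  proof (intro exI[of _ "d / 2"] conjI allI impI)
    show "0 < d / 2" using \<open>0 < d\<close> by simp
    fix x y :: real assume "0 \<le> y" "y \<le> x" "x \<le> C" "x \<le> y + d / 2"
    then have "dist (x powr p) (y powr p) < \<eta>" using d[of y x] \<open>0 < d\<close> by (simp add: dist_real_def)
    then show "x powr p < y powr p + \<eta>" by (simp add: dist_real_def)
  qed
qed

lemma lpw_norm_powr: "0 < p \<Longrightarrow> lpw_norm p w a powr p = enn2real (lpw_pow p w a)"
  unfolding lpw_norm_def by (simp add: powr_powr)

lemma lpw_pow_le_of_lpw_norm_le:
  assumes "0 < p" and "a \<in> Lpw p w" and "lpw_norm p w a \<le> C"
  shows "lpw_pow p w a \<le> ennreal (max C 0 powr p)"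
proof -
  have "lpw_norm p w a powr p \<le> max C 0 powr p"
    using assms(1,3) by (intro powr_mono2) (auto simp: lpw_norm_def)
  then show ?thesis
    using assms(1,2) by (intro enn2real_le) (auto simp: Lpw_def lpw_norm_powr)
qed

lemma lpw_norm_powr_less:
  assumes "0 < p" and "lpw_pow p w a < ennreal \<epsilon>"
  shows "lpw_norm p w a powr p < \<epsilon>"
proof -
  have "lpw_pow p w a < \<infinity>" using assms(2) by (rule order.strict_trans) simp
  with assms show ?thesis by (simp add: lpw_norm_powr)
qed

lemma equinormed_lpw_pow:
  assumes "0 < p" and "\<And>i. 0 \<le> w i" and "A \<subseteq> Lpw p w" and "\<forall>a\<in>A. lpw_norm p w a \<le> C"
    and "equinormed p w A" and "0 < \<eta>"
  obtains i where "\<forall>a\<in>A. lpw_pow p w a \<le> lpw_pow p w (trunc_seq i a) + ennreal \<eta>"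
proof -
  obtain \<delta> where "0 < \<delta>" and close:
    "\<And>x y. 0 \<le> y \<Longrightarrow> y \<le> x \<Longrightarrow> x \<le> C \<Longrightarrow> x \<le> y + \<delta> \<Longrightarrow> x powr p < y powr p + \<eta>"
    using powr_uniformly_close[OF assms(1,6)] by blast
  obtain i where i: "\<forall>a\<in>A. lpw_norm p w a \<le> lpw_norm_i p w i a + \<delta>"
    using assms(5) \<open>0 < \<delta>\<close> unfolding equinormed_def by blast
  have trunc_close: "lpw_pow p w a \<le> lpw_pow p w (trunc_seq i a) + ennreal \<eta>" if "a \<in> A" for a
  proof -
    have finite: "lpw_pow p w a < \<infinity>" using that assms(3) by (auto simp: Lpw_def)
    have trunc_le: "lpw_pow p w (trunc_seq i a) \<le> lpw_pow p w a"
      using assms(1,2) abs_trunc_seq_le by (intro lpw_pow_mono) (auto simp: less_imp_le)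
    then have "lpw_norm_i p w i a \<le> lpw_norm p w a"
      unfolding lpw_norm_i_def lpw_norm_def using finite assms(1)
      by (intro powr_mono2 enn2real_mono) auto
    then have "lpw_norm p w a powr p < lpw_norm_i p w i a powr p + \<eta>"
      using that assms(4) i by (intro close) (auto simp: lpw_norm_i_def lpw_norm_def)
    then have "enn2real (lpw_pow p w a) < enn2real (lpw_pow p w (trunc_seq i a)) + \<eta>"
      unfolding lpw_norm_i_def lpw_norm_powr[OF assms(1)] .
    moreover have "lpw_pow p w (trunc_seq i a) < \<infinity>" using trunc_le finite by (rule le_less_trans)
    ultimately show ?thesis
      using finite assms(6) ennreal_leI[of "enn2real (lpw_pow p w a)"] by (simp add: ennreal_plus)
  qed
  show ?thesis by (rule that[of i]) (simp add: trunc_close)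
qed

lemma uniform_level_set_card_bound:
  assumes "\<And>i. 0 \<le> w i" and "\<not> summable w" and "0 < l"
    and "0 \<le> B" and "\<forall>a\<in>A. lpw_pow p w a \<le> ennreal B"
  obtains M where "\<forall>a\<in>A. card {k. l < \<bar>a k\<bar> powr p} \<le> M"
proof -
  obtain M where "B / l < weight_sum w M"
    using weight_sum_unbounded[OF assms(1,2)] by blast
  then have "B < l * weight_sum w M" using assms(3) by (simp add: field_simps)
  moreover have "l * weight_sum w M \<le> l * weight_sum w (Suc M)"
    using assms(1,3) by (intro mult_left_mono weight_sum_mono) auto
  ultimately have "B < l * weight_sum w (Suc M)" by linarith
  have lt: "lpw_pow p w a < ennreal (l * weight_sum w (Suc M))" if "a \<in> A" for a
  proof -
    have "lpw_pow p w a \<le> ennreal B" using assms(5) that by blast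
    also have "\<dots> < ennreal (l * weight_sum w (Suc M))"
      using \<open>B < l * weight_sum w (Suc M)\<close> assms(4) by (intro ennreal_lessI) auto
    finally show ?thesis .
  qed
  have "card {k. l < \<bar>a k\<bar> powr p} \<le> M" if "a \<in> A" for a
    using assms(1) less_imp_le[OF assms(3)] lt[OF that] by (rule level_set_card_le(2))
  then show ?thesis by (rule that[rule_format])
qed

theorem mainTheorem13:
  fixes p :: real and w :: "nat \<Rightarrow> real" and A :: "(nat \<Rightarrow> real) set"
  assumes "1 \<le> p" and "weight_seq w" and "A \<subseteq> Lpw p w"
    and "\<exists>C. \<forall>a\<in>A. lpw_norm p w a \<le> C"
    and "equinormed p w A"
  shows "\<forall>\<epsilon>>0. \<exists>N. \<forall>a\<in>A. \<forall>i\<ge>N. lpw_norm p w (tail_seq i a) powr p < \<epsilon>"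
proof (intro allI impI)
  fix \<epsilon> :: real assume "0 < \<epsilon>"
  have "0 < p" using assms(1) by simp
  note w = weight_seqD[OF assms(2)]
  obtain C where C: "\<forall>a\<in>A. lpw_norm p w a \<le> C" using assms(4) by blast
  obtain i where i: "\<forall>a\<in>A. lpw_pow p w a \<le> lpw_pow p w (trunc_seq i a) + ennreal (\<epsilon> / 4)"
    by (rule equinormed_lpw_pow[where w = w and \<eta> = "\<epsilon> / 4",
          OF \<open>0 < p\<close> w(2) assms(3) C assms(5)])
      (use \<open>0 < \<epsilon>\<close> in simp)
  define l where "l = \<epsilon> / (4 * (weight_sum w i + 1))"
  have "0 < l" and l: "l * weight_sum w i < \<epsilon> / 4"
    using \<open>0 < \<epsilon>\<close> weight_sum_nonneg[of w i] w(2) unfolding l_def by (auto simp: field_simps)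
  have "\<forall>a\<in>A. lpw_pow p w a \<le> ennreal (max C 0 powr p)"
    using lpw_pow_le_of_lpw_norm_le[OF \<open>0 < p\<close>] assms(3) C by blast
  then obtain M where M: "\<forall>a\<in>A. card {k. l < \<bar>a k\<bar> powr p} \<le> M"
    by (rule uniform_level_set_card_bound[where w = w, OF w(2,5) \<open>0 < l\<close> powr_ge_zero])
  obtain j where j: "\<forall>a\<in>A. lpw_pow p w a \<le> lpw_pow p w (trunc_seq j a) + ennreal (\<epsilon> * w M / 4)"
    by (rule equinormed_lpw_pow[where w = w and \<eta> = "\<epsilon> * w M / 4",
          OF \<open>0 < p\<close> w(2) assms(3) C assms(5)])
      (use \<open>0 < \<epsilon>\<close> w(1) in simp)
  have "lpw_pow p w (tail_seq n a) < ennreal \<epsilon>" if "a \<in> A" and "max i j \<le> n" for a n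
  proof -
    have "lpw_pow p w (tail_seq n a) \<le> ennreal (\<epsilon> / 4 + l * weight_sum w i + (\<epsilon> * w M / 4) / w M)"
      using that assms(3) M i j \<open>0 < \<epsilon>\<close> w(1)[of M] \<open>0 < l\<close>
      by (intro lpw_pow_tail_seq_le[where i = i and j = j, OF assms(2) \<open>0 < p\<close>])
        (auto simp: Lpw_def)
    also have "\<dots> < ennreal \<epsilon>" using l w(1)[of M] \<open>0 < \<epsilon>\<close> by (intro ennreal_lessI) auto
    finally show ?thesis .
  qed
  then show "\<exists>N. \<forall>a\<in>A. \<forall>n\<ge>N. lpw_norm p w (tail_seq n a) powr p < \<epsilon>"
    using lpw_norm_powr_less[OF \<open>0 < p\<close>] by blast
qed

end
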